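(* Let $q$ be a Boolean conjunctive query without self-join. If $q$ is safe, then $\mathsf{CERTAINTY}(q)$ is first-order expressible.
   Context: Relation names have signatures $[n,k]$ ($n\ge k\ge 1$; arity $n$, primary key positions $1,\dots,k$). Atoms have variables or constants as arguments; a fact is an atom without variables; facts are key-equal if they have the same relation name and agree on the primary key. For an atom $F$, $\mathit{key}(F)$ is the set of variables in its primary-key positions and $\mathit{vars}(F)$ the set of its variables. An uncertain database is a finite set of facts; a repair is a maximal subset with no two distinct key-equal facts. A Boolean conjunctive query $q$ is a finite set of atoms (existentially closed conjunction), $\mathit{vars}(q)$ its set of variables; it has a self-join if some relation name occurs in two of its atoms. $\mathsf{CERTAINTY}(q)$ is the set of uncertain databases all of whose repairs satisfy $q$; it is first-order expressible if there is a first-order sentence $\varphi$ such that for every uncertain database ${\mathbf{db}}$, ${\mathbf{db}}\in\mathsf{CERTAINTY}(q)$ iff ${\mathbf{db}}\models\varphi$. For a variable $x$ and constant $a$, $q[x\mapsto a]$ denotes $q$ with every occurrence of $x$ replaced by $a$. Safety: $q$ is safe iff the following procedure $\mathrm{IsSafe}(q)$ returns true, where the rules are tried in order and the first applicable rule is executed ($a$ is an arbitrary fixed constant): (SE1) if $|q|=1$ and $\mathit{vars}(q)=\emptyset$, return true; (SE2) if $q=q_1\cup q_2$ with $q_1\neq\emptyset\neq q_2$ and $\mathit{vars}(q_1)\cap\mathit{vars}(q_2)=\emptyset$, return $\mathrm{IsSafe}(q_1)\wedge\mathrm{IsSafe}(q_2)$; (SE3) if $\bigcap_{F\in q}\mathit{key}(F)\neq\emptyset$,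 select $x$ in this intersection and return $\mathrm{IsSafe}(q[x\mapsto a])$; (SE4) if some $F\in q$ has $\mathit{key}(F)=\emptyset\neq\mathit{vars}(F)$, select such $F$ and some $x\in\mathit{vars}(F)$ and return $\mathrm{IsSafe}(q[x\mapsto a])$; otherwise return false. *)

theory Defs
  imports Main
begin

text \<open>A relation name carries its signature [n,k]: (name, n, k).\<close>
type_synonym 'r relname = "'r \<times> nat \<times> nat"

definition arity :: "'r relname \<Rightarrow> nat" where "arity R = fst (snd R)"
definition keylen :: "'r relname \<Rightarrow> nat" where "keylen R = snd (snd R)"
definition valid_sig :: "'r relname \<Rightarrow> bool" where
  "valid_sig R \<longleftrightarrow> 1 \<le> keylen R \<and> keylen R \<le> arity R"

datatype ('v, 'c) trm = Var 'v | Cst 'c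

type_synonym ('r, 'v, 'c) atom = "'r relname \<times> ('v, 'c) trm list"
type_synonym ('r, 'c) fact = "'r relname \<times> 'c list"

definition wf_atom :: "('r, 'v, 'c) atom \<Rightarrow> bool" where
  "wf_atom F \<longleftrightarrow> valid_sig (fst F) \<and> length (snd F) = arity (fst F)"

definition wf_fact :: "('r, 'c) fact \<Rightarrow> bool" where
  "wf_fact f \<longleftrightarrow> valid_sig (fst f) \<and> length (snd f) = arity (fst f)"

definition key_vars :: "('r, 'v, 'c) atom \<Rightarrow> 'v set" where
  "key_vars F = {x. Var x \<in> set (take (keylen (fst F)) (snd F))}"

definition atom_vars :: "('r, 'v, 'c) atom \<Rightarrow> 'v set" where
  "atom_vars F = {x. Var x \<in> set (snd F)}"

definition key_equal :: "('r, 'c) fact \<Rightarrow> ('r, 'c) fact \<Rightarrow> bool" where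
  "key_equal f g \<longleftrightarrow> fst f = fst g \<and>
     take (keylen (fst f)) (snd f) = take (keylen (fst g)) (snd g)"

definition uncertain_db :: "('r, 'c) fact set \<Rightarrow> bool" where
  "uncertain_db db \<longleftrightarrow> finite db \<and> (\<forall>f\<in>db. wf_fact f)"

definition consistent :: "('r, 'c) fact set \<Rightarrow> bool" where
  "consistent r \<longleftrightarrow> (\<forall>f\<in>r. \<forall>g\<in>r. key_equal f g \<longrightarrow> f = g)"

definition is_repair :: "('r, 'c) fact set \<Rightarrow> ('r, 'c) fact set \<Rightarrow> bool" where
  "is_repair db r \<longleftrightarrow> r \<subseteq> db \<and> consistent r \<and>
     (\<forall>r'. r \<subseteq> r' \<and> r' \<subseteq> db \<and> consistent r' \<longrightarrow> r' = r)"

type_synonym ('r, 'v, 'c) query = "('r, 'v, 'c) atom set"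

definition wf_query :: "('r, 'v, 'c) query \<Rightarrow> bool" where
  "wf_query q \<longleftrightarrow> finite q \<and> (\<forall>F\<in>q. wf_atom F)"

definition query_vars :: "('r, 'v, 'c) query \<Rightarrow> 'v set" where
  "query_vars q = (\<Union>F\<in>q. atom_vars F)"

definition self_join_free :: "('r, 'v, 'c) query \<Rightarrow> bool" where
  "self_join_free q \<longleftrightarrow> (\<forall>F\<in>q. \<forall>G\<in>q. fst F = fst G \<longrightarrow> F = G)"

fun inst_trm :: "('v \<Rightarrow> 'c) \<Rightarrow> ('v, 'c) trm \<Rightarrow> 'c" where
  "inst_trm \<theta> (Var x) = \<theta> x"
| "inst_trm \<theta> (Cst c) = c"

definition satisfies :: "('r, 'c) fact set \<Rightarrow> ('r, 'v, 'c) query \<Rightarrow> bool" where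
  "satisfies db q \<longleftrightarrow> (\<exists>\<theta>. \<forall>F\<in>q. (fst F, map (inst_trm \<theta>) (snd F)) \<in> db)"

definition CERTAINTY :: "('r, 'v, 'c) query \<Rightarrow> ('r, 'c) fact set set" where
  "CERTAINTY q = {db. uncertain_db db \<and> (\<forall>r. is_repair db r \<longrightarrow> satisfies r q)}"

text \<open>First-order formulas over the relation names, with equality and constants;
  formula variables are natural numbers. Quantifiers range over all constants.\<close>

datatype ('r, 'c) fo =
    FAtom "'r relname" "(nat, 'c) trm list"
  | FEq "(nat, 'c) trm" "(nat, 'c) trm"
  | FNeg "('r, 'c) fo"
  | FConj "('r, 'c) fo" "('r, 'c) fo"
  | FEx nat "('r, 'c) fo"

fun trm_fv :: "(nat, 'c) trm \<Rightarrow> nat set" where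
  "trm_fv (Var x) = {x}"
| "trm_fv (Cst c) = {}"

fun fv :: "('r, 'c) fo \<Rightarrow> nat set" where
  "fv (FAtom R ts) = (\<Union>t\<in>set ts. trm_fv t)"
| "fv (FEq s t) = trm_fv s \<union> trm_fv t"
| "fv (FNeg \<phi>) = fv \<phi>"
| "fv (FConj \<phi> \<psi>) = fv \<phi> \<union> fv \<psi>"
| "fv (FEx x \<phi>) = fv \<phi> - {x}"

fun holds :: "('r, 'c) fact set \<Rightarrow> (nat \<Rightarrow> 'c) \<Rightarrow> ('r, 'c) fo \<Rightarrow> bool" where
  "holds db \<sigma> (FAtom R ts) \<longleftrightarrow> (R, map (inst_trm \<sigma>) ts) \<in> db"
| "holds db \<sigma> (FEq s t) \<longleftrightarrow> inst_trm \<sigma> s = inst_trm \<sigma> t"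
| "holds db \<sigma> (FNeg \<phi>) \<longleftrightarrow> \<not> holds db \<sigma> \<phi>"
| "holds db \<sigma> (FConj \<phi> \<psi>) \<longleftrightarrow> holds db \<sigma> \<phi> \<and> holds db \<sigma> \<psi>"
| "holds db \<sigma> (FEx x \<phi>) \<longleftrightarrow> (\<exists>c. holds db (\<sigma>(x := c)) \<phi>)"

definition sentence :: "('r, 'c) fo \<Rightarrow> bool" where
  "sentence \<phi> \<longleftrightarrow> fv \<phi> = {}"

definition models :: "('r, 'c) fact set \<Rightarrow> ('r, 'c) fo \<Rightarrow> bool" where
  "models db \<phi> \<longleftrightarrow> (\<forall>\<sigma>. holds db \<sigma> \<phi>)"

definition fo_expressible :: "('r, 'v, 'c) query \<Rightarrow> bool" where
  "fo_expressible q \<longleftrightarrow> (\<exists>\<phi> :: ('r, 'c) fo. sentence \<phi> \<and>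
     (\<forall>db. uncertain_db db \<longrightarrow> (db \<in> CERTAINTY q \<longleftrightarrow> models db \<phi>)))"

fun subst_trm :: "'v \<Rightarrow> 'c \<Rightarrow> ('v, 'c) trm \<Rightarrow> ('v, 'c) trm" where
  "subst_trm x a (Var y) = (if y = x then Cst a else Var y)"
| "subst_trm x a (Cst c) = Cst c"

definition subst_query :: "'v \<Rightarrow> 'c \<Rightarrow> ('r, 'v, 'c) query \<Rightarrow> ('r, 'v, 'c) query" where
  "subst_query x a q = (\<lambda>F. (fst F, map (subst_trm x a) (snd F))) ` q"

definition SE1_cond :: "('r, 'v, 'c) query \<Rightarrow> bool" where
  "SE1_cond q \<longleftrightarrow> card q = 1 \<and> query_vars q = {}"

definition SE2_cond :: "('r, 'v, 'c) query \<Rightarrow> bool" where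
  "SE2_cond q \<longleftrightarrow> (\<exists>q1 q2. q = q1 \<union> q2 \<and> q1 \<noteq> {} \<and> q2 \<noteq> {} \<and>
      query_vars q1 \<inter> query_vars q2 = {})"

definition SE3_cond :: "('r, 'v, 'c) query \<Rightarrow> bool" where
  "SE3_cond q \<longleftrightarrow> q \<noteq> {} \<and> (\<Inter>F\<in>q. key_vars F) \<noteq> {}"

definition SE4_cond :: "('r, 'v, 'c) query \<Rightarrow> bool" where
  "SE4_cond q \<longleftrightarrow> (\<exists>F\<in>q. key_vars F = {} \<and> atom_vars F \<noteq> {})"

text \<open>IsSafe(q) returns true for some execution of the (nondeterministic) procedure;
  rules are tried in order and the first applicable one is executed.\<close>
inductive is_safe :: "('r, 'v, 'c) query \<Rightarrow> bool" where
  SE1: "SE1_cond q \<Longrightarrow> is_safe q"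
| SE2: "\<not> SE1_cond q \<Longrightarrow> q = q1 \<union> q2 \<Longrightarrow> q1 \<noteq> {} \<Longrightarrow> q2 \<noteq> {} \<Longrightarrow>
        query_vars q1 \<inter> query_vars q2 = {} \<Longrightarrow> is_safe q1 \<Longrightarrow> is_safe q2 \<Longrightarrow> is_safe q"
| SE3: "\<not> SE1_cond q \<Longrightarrow> \<not> SE2_cond q \<Longrightarrow> q \<noteq> {} \<Longrightarrow> x \<in> (\<Inter>F\<in>q. key_vars F) \<Longrightarrow>
        is_safe (subst_query x a q) \<Longrightarrow> is_safe q"
| SE4: "\<not> SE1_cond q \<Longrightarrow> \<not> SE2_cond q \<Longrightarrow> \<not> SE3_cond q \<Longrightarrow> F \<in> q \<Longrightarrow>
        key_vars F = {} \<Longrightarrow> x \<in> atom_vars F \<Longrightarrow>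
        is_safe (subst_query x a q) \<Longrightarrow> is_safe q"

end

theory Submission
  imports Defs
begin

text \<open>By induction on the safety derivation, each rule characterises certainty of q
  through certainty of smaller queries. SE2: a union of variable-disjoint queries is certain iff
  both parts are. SE3: if x occurs in the primary key of every atom, q is certain iff q[x \<mapsto> c]
  is certain for some constant c; conversely, repairs falsifying q[x \<mapsto> c] for every c can be
  combined into one repair falsifying q by choosing, for each block, the repair indexed by the value
  that the key of the block fixes for x. SE4: if the atom F has a ground key, q is certain iff the
  block of F is nonempty and, for every value c at a position of x in that block, q[x \<mapsto> c] is
  certain in the database where the block is restricted to the facts carrying c there. SE1: a
  ground atom is certain iff it is the only fact of its block. Each characterisation is first-order
  in rewritings of the smaller queries, with c as a quantified variable; hence the induction runs
  over queries whose constants are first-order terms.\<close>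

abbreviation certain :: "('r, 'c) fact set \<Rightarrow> ('r, 'v, 'c) query \<Rightarrow> bool" where
  "certain db q \<equiv> \<forall>r. is_repair db r \<longrightarrow> satisfies r q"

abbreviation inst_atom :: "('v \<Rightarrow> 'c) \<Rightarrow> ('r, 'v, 'c) atom \<Rightarrow> ('r, 'c) fact" where
  "inst_atom \<theta> F \<equiv> (fst F, map (inst_trm \<theta>) (snd F))"

lemma CERTAINTY_iff: "db \<in> CERTAINTY q \<longleftrightarrow> uncertain_db db \<and> certain db q"
  by (simp add: CERTAINTY_def)

lemma is_repair_iff:
  "is_repair db r \<longleftrightarrow> r \<subseteq> db \<and> consistent r \<and> (\<forall>f\<in>db. \<exists>g\<in>r. key_equal f g)"
proof
  assume R: "is_repair db r"
  have "\<exists>g\<in>r. key_equal f g" if f: "f \<in> db" for f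
  proof (rule ccontr)
    assume N: "\<not> (\<exists>g\<in>r. key_equal f g)"
    with R have "consistent (insert f r)"
      unfolding is_repair_def consistent_def key_equal_def by auto
    with R f have "f \<in> r" unfolding is_repair_def by blast
    with N show False by (auto simp: key_equal_def)
  qed
  with R show "r \<subseteq> db \<and> consistent r \<and> (\<forall>f\<in>db. \<exists>g\<in>r. key_equal f g)"
    unfolding is_repair_def by blast
next
  assume A: "r \<subseteq> db \<and> consistent r \<and> (\<forall>f\<in>db. \<exists>g\<in>r. key_equal f g)"
  have "r' \<subseteq> r" if "r' \<subseteq> db" "consistent r'" "r \<subseteq> r'" for r'
    using A that unfolding consistent_def by blast
  with A show "is_repair db r" unfolding is_repair_def by blast
qed

lemma repair_extends:
  assumes "finite db" "s \<subseteq> db" "consistent s"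
  obtains r where "is_repair db r" "s \<subseteq> r"
proof -
  let ?C = "{r. s \<subseteq> r \<and> r \<subseteq> db \<and> consistent r}"
  have "finite ?C" using assms(1) by (rule finite_subset[rotated, OF finite_Pow_iff[THEN iffD2]]) auto
  moreover have "s \<in> ?C" using assms by auto
  ultimately obtain m where "m \<in> ?C" "\<forall>b\<in>?C. m \<subseteq> b \<longrightarrow> m = b"
    using finite_has_maximal[of ?C] by blast
  then have "is_repair db m" unfolding is_repair_def by blast
  with \<open>m \<in> ?C\<close> show thesis using that by blast
qed

lemma repair_exists: "finite db \<Longrightarrow> \<exists>r. is_repair db r"
  by (rule repair_extends[of db "{}"]) (auto simp: consistent_def)

lemma satisfies_mono: "r \<subseteq> r' \<Longrightarrow> satisfies r q \<Longrightarrow> satisfies r' q"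
  unfolding satisfies_def by blast

lemma certain_imp_satisfies_db:
  assumes "finite db" "certain db q"
  shows "satisfies db q"
proof -
  obtain r where "is_repair db r" using repair_exists[OF assms(1)] by blast
  with assms(2) show ?thesis by (meson is_repair_def satisfies_mono)
qed

lemma repair_glue:
  assumes rep: "\<And>c. is_repair db (rc c)"
    and sel: "\<And>g g'. key_equal g g' \<Longrightarrow> sel g = sel g'"
  shows "is_repair db {g\<in>db. g \<in> rc (sel g)}"
  unfolding is_repair_iff
proof (intro conjI ballI)
  show "consistent {g\<in>db. g \<in> rc (sel g)}" unfolding consistent_def
  proof (intro ballI impI)
    fix f g assume "f \<in> {g\<in>db. g \<in> rc (sel g)}" "g \<in> {g\<in>db. g \<in> rc (sel g)}" "key_equal f g"
    moreover have "consistent (rc (sel f))" using rep unfolding is_repair_def by blast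
    ultimately show "f = g" using sel[of f g] unfolding consistent_def by auto
  qed
  fix f assume "f \<in> db"
  then obtain g where "g \<in> rc (sel f)" "key_equal f g"
    using rep unfolding is_repair_iff by blast
  moreover from this have "g \<in> db" "sel g = sel f"
    using rep sel[of f g] unfolding is_repair_def by auto
  ultimately show "\<exists>g\<in>{g\<in>db. g \<in> rc (sel g)}. key_equal f g" by (intro bexI[of _ g]) auto
qed auto

lemma inst_trm_subst_trm: "inst_trm \<theta> (subst_trm x c t) = inst_trm (\<theta>(x := c)) t"
  by (cases t) auto

lemma satisfies_subst_query:
  "satisfies r (subst_query x c q) \<longleftrightarrow> (\<exists>\<theta>. \<theta> x = c \<and> (\<forall>F\<in>q. inst_atom \<theta> F \<in> r))"
proof
  assume "satisfies r (subst_query x c q)"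
  then obtain \<theta> where "\<forall>F\<in>q. inst_atom (\<theta>(x := c)) F \<in> r"
    by (auto simp: satisfies_def subst_query_def comp_def inst_trm_subst_trm)
  then show "\<exists>\<theta>. \<theta> x = c \<and> (\<forall>F\<in>q. inst_atom \<theta> F \<in> r)" by (intro exI[of _ "\<theta>(x := c)"]) auto
next
  assume "\<exists>\<theta>. \<theta> x = c \<and> (\<forall>F\<in>q. inst_atom \<theta> F \<in> r)"
  then obtain \<theta> where "\<theta> x = c" "\<forall>F\<in>q. inst_atom \<theta> F \<in> r" by blast
  moreover from \<open>\<theta> x = c\<close> have "\<theta>(x := c) = \<theta>" by auto
  ultimately show "satisfies r (subst_query x c q)"
    by (auto simp: satisfies_def subst_query_def comp_def inst_trm_subst_trm intro!: exI[of _ \<theta>])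
qed

lemma satisfies_subst_query_imp: "satisfies r (subst_query x c q) \<Longrightarrow> satisfies r q"
  using satisfies_subst_query[of r x c q] unfolding satisfies_def by blast

lemma inst_atom_cong:
  assumes "\<And>y. y \<in> atom_vars F \<Longrightarrow> \<theta> y = \<theta>' y"
  shows "inst_atom \<theta> F = inst_atom \<theta>' F"
proof -
  have "inst_trm \<theta> t = inst_trm \<theta>' t" if "t \<in> set (snd F)" for t
  proof (cases t)
    case (Var y)
    with that have "y \<in> atom_vars F" by (simp add: atom_vars_def)
    with Var assms show ?thesis by simp
  qed simp
  then show ?thesis by simp
qed

lemma satisfies_union_disjoint:
  assumes "query_vars q1 \<inter> query_vars q2 = {}"
  shows "satisfies r (q1 \<union> q2) \<longleftrightarrow> satisfies r q1 \<and> satisfies r q2"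
proof
  assume "satisfies r q1 \<and> satisfies r q2"
  then obtain \<theta>1 \<theta>2 where \<theta>1: "\<forall>F\<in>q1. inst_atom \<theta>1 F \<in> r" and \<theta>2: "\<forall>F\<in>q2. inst_atom \<theta>2 F \<in> r"
    unfolding satisfies_def by blast
  define \<theta> where "\<theta> v = (if v \<in> query_vars q1 then \<theta>1 v else \<theta>2 v)" for v
  have "inst_atom \<theta> F \<in> r" if "F \<in> q1" for F
  proof -
    have "inst_atom \<theta> F = inst_atom \<theta>1 F"
      using that by (intro inst_atom_cong) (auto simp: \<theta>_def query_vars_def)
    with \<theta>1 that show ?thesis by metis
  qed
  moreover have "inst_atom \<theta> F \<in> r" if "F \<in> q2" for F
  proof -
    have "inst_atom \<theta> F = inst_atom \<theta>2 F"
      using that assms by (intro inst_atom_cong) (auto simp: \<theta>_def query_vars_def)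
    with \<theta>2 that show ?thesis by metis
  qed
  ultimately show "satisfies r (q1 \<union> q2)" unfolding satisfies_def by blast
qed (auto simp: satisfies_def)

section \<open>Certainty under the safety rules\<close>

lemma certain_union_disjoint:
  "query_vars q1 \<inter> query_vars q2 = {} \<Longrightarrow> certain db (q1 \<union> q2) \<longleftrightarrow> certain db q1 \<and> certain db q2"
  using satisfies_union_disjoint[of q1 q2] by blast

lemma key_var_selector:
  fixes q :: "('r, 'v, 'c) query"
  assumes sjf: "self_join_free q" and kx: "\<forall>F\<in>q. x \<in> key_vars F"
  obtains sel :: "('r, 'c) fact \<Rightarrow> 'c"
  where "\<And>g g'. key_equal g g' \<Longrightarrow> sel g = sel g'" "\<And>\<theta> F. F \<in> q \<Longrightarrow> sel (inst_atom \<theta> F) = \<theta> x"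
proof
  define pos where
    "pos R = (SOME i. \<exists>F\<in>q. fst F = R \<and> i < keylen R \<and> i < length (snd F) \<and> snd F ! i = Var x)"
    for R :: "'r relname"
  define sel where "sel g = take (keylen (fst g)) (snd g) ! pos (fst g)" for g :: "('r, 'c) fact"
  show "sel g = sel g'" if "key_equal g g'" for g g'
  proof -
    from that have "fst g = fst g'" "take (keylen (fst g)) (snd g) = take (keylen (fst g)) (snd g')"
      by (auto simp: key_equal_def)
    then show ?thesis by (simp add: sel_def)
  qed
  show "sel (inst_atom \<theta> F) = \<theta> x" if F: "F \<in> q" for \<theta> F
  proof -
    from kx F obtain i where "i < keylen (fst F)" "i < length (snd F)" "snd F ! i = Var x"
      by (auto simp: key_vars_def in_set_conv_nth)
    with F have "\<exists>i. \<exists>G\<in>q. fst G = fst F \<and> i < keylen (fst F) \<and> i < length (snd G) \<and> snd G ! i = Var x"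
      by blast
    then have "\<exists>G\<in>q. fst G = fst F \<and> pos (fst F) < keylen (fst F) \<and> pos (fst F) < length (snd G) \<and>
        snd G ! pos (fst F) = Var x"
      unfolding pos_def by (rule someI_ex)
    then obtain G where "G \<in> q" "fst G = fst F"
      "pos (fst F) < keylen (fst F)" "pos (fst F) < length (snd G)" "snd G ! pos (fst F) = Var x"
      by blast
    moreover from this sjf F have "G = F" unfolding self_join_free_def by blast
    ultimately show ?thesis by (simp add: sel_def)
  qed
qed

lemma certain_subst_key_var_iff:
  fixes q :: "('r, 'v, 'c) query"
  assumes sjf: "self_join_free q" and kx: "\<forall>F\<in>q. x \<in> key_vars F"
  shows "certain db q \<longleftrightarrow> (\<exists>c. certain db (subst_query x c q))"
proof
  assume cert: "certain db q"
  show "\<exists>c. certain db (subst_query x c q)"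
  proof (rule ccontr)
    assume "\<not> ?thesis"
    then have "\<forall>c. \<exists>r. is_repair db r \<and> \<not> satisfies r (subst_query x c q)" by blast
    then have "\<exists>rc. \<forall>c. is_repair db (rc c) \<and> \<not> satisfies (rc c) (subst_query x c q)" by (rule choice)
    then obtain rc where rc: "\<And>c. is_repair db (rc c)" "\<And>c. \<not> satisfies (rc c) (subst_query x c q)"
      by blast
    obtain sel :: "('r, 'c) fact \<Rightarrow> 'c" where sel: "\<And>g g'. key_equal g g' \<Longrightarrow> sel g = sel g'"
      "\<And>\<theta> F. F \<in> q \<Longrightarrow> sel (inst_atom \<theta> F) = \<theta> x"
      using key_var_selector[OF sjf kx] by blast
    from rc(1) sel(1) have "is_repair db {g\<in>db. g \<in> rc (sel g)}" by (rule repair_glue)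
    with cert have "satisfies {g\<in>db. g \<in> rc (sel g)} q" by blast
    then obtain \<theta> where "\<forall>F\<in>q. inst_atom \<theta> F \<in> {g\<in>db. g \<in> rc (sel g)}"
      unfolding satisfies_def by blast
    with sel(2) have "\<forall>F\<in>q. inst_atom \<theta> F \<in> rc (\<theta> x)" by auto
    then have "satisfies (rc (\<theta> x)) (subst_query x (\<theta> x) q)"
      unfolding satisfies_subst_query by blast
    with rc(2) show False by blast
  qed
next
  assume "\<exists>c. certain db (subst_query x c q)"
  then show "certain db q" by (meson satisfies_subst_query_imp)
qed

definition in_block :: "'r relname \<Rightarrow> 'c list \<Rightarrow> ('r, 'c) fact \<Rightarrow> bool" where
  "in_block R kc g \<longleftrightarrow> fst g = R \<and> take (keylen R) (snd g) = kc"

definition pin_block :: "('r, 'c) fact set \<Rightarrow> 'r relname \<Rightarrow> 'c list \<Rightarrow> nat \<Rightarrow> 'c \<Rightarrow> ('r, 'c) fact set" where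
  "pin_block db R kc i c = {g\<in>db. in_block R kc g \<longrightarrow> snd g ! i = c}"

lemma in_block_key_equal: "in_block R kc g \<Longrightarrow> key_equal g h \<longleftrightarrow> in_block R kc h"
  by (auto simp: in_block_def key_equal_def)

lemma repair_of_pin_block:
  assumes g: "g \<in> db" "in_block R kc g" "snd g ! i = c"
    and rep: "is_repair (pin_block db R kc i c) r"
  shows "is_repair db r"
  unfolding is_repair_iff
proof (intro conjI ballI)
  from rep show "r \<subseteq> db" "consistent r" by (auto simp: is_repair_def pin_block_def)
  fix f assume "f \<in> db"
  show "\<exists>h\<in>r. key_equal f h"
  proof (cases "f \<in> pin_block db R kc i c")
    case True
    with rep show ?thesis unfolding is_repair_iff by blast
  next
    case False
    with \<open>f \<in> db\<close> have f: "in_block R kc f" by (simp add: pin_block_def)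
    from g have "g \<in> pin_block db R kc i c" by (simp add: pin_block_def)
    with rep obtain h where "h \<in> r" "key_equal g h" unfolding is_repair_iff by blast
    with g(2) have "in_block R kc h" by (simp add: in_block_key_equal)
    with f have "key_equal f h" by (simp add: in_block_key_equal)
    with \<open>h \<in> r\<close> show ?thesis by blast
  qed
qed

lemma repair_is_repair_of_pin_block:
  assumes rep: "is_repair db r" and h: "h \<in> r" "in_block R kc h"
  shows "is_repair (pin_block db R kc i (snd h ! i)) r"
  unfolding is_repair_iff
proof (intro conjI ballI subsetI)
  fix f assume "f \<in> r"
  with rep have "f \<in> db" unfolding is_repair_def by blast
  moreover have "f = h" if "in_block R kc f"
  proof -
    from that h(2) have "key_equal f h" by (simp add: in_block_key_equal)
    with rep \<open>f \<in> r\<close> h(1) show ?thesis unfolding is_repair_def consistent_def by blast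
  qed
  ultimately show "f \<in> pin_block db R kc i (snd h ! i)" by (auto simp: pin_block_def)
next
  from rep show "consistent r" by (simp add: is_repair_def)
  fix f assume "f \<in> pin_block db R kc i (snd h ! i)"
  with rep show "\<exists>g\<in>r. key_equal f g" unfolding is_repair_iff pin_block_def by blast
qed

lemma certain_subst_ground_key_iff:
  assumes "finite db" and F: "F \<in> q" "fst F = R" "take (keylen R) (snd F) = map Cst kc"
    "i < length (snd F)" "snd F ! i = Var x"
  shows "certain db q \<longleftrightarrow> (\<exists>g\<in>db. in_block R kc g) \<and>
    (\<forall>c. (\<exists>g\<in>db. in_block R kc g \<and> snd g ! i = c) \<longrightarrow> certain (pin_block db R kc i c) (subst_query x c q))"
proof
  have F_block: "in_block R kc (inst_atom \<theta> F)" for \<theta>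
    using F(2,3) by (simp add: in_block_def take_map comp_def)
  assume cert: "certain db q"
  then obtain \<theta> where "\<forall>F\<in>q. inst_atom \<theta> F \<in> db"
    using certain_imp_satisfies_db[OF assms(1)] unfolding satisfies_def by blast
  with F_block F(1) have "\<exists>g\<in>db. in_block R kc g" by blast
  moreover have "satisfies r (subst_query x c q)"
    if "g \<in> db" "in_block R kc g" "snd g ! i = c" "is_repair (pin_block db R kc i c) r" for c g r
  proof -
    from that have "is_repair db r" by (rule repair_of_pin_block)
    with cert obtain \<theta> where \<theta>: "\<forall>F\<in>q. inst_atom \<theta> F \<in> r" unfolding satisfies_def by blast
    with that(4) F(1) have "inst_atom \<theta> F \<in> pin_block db R kc i c" by (auto simp: is_repair_def)
    with F_block F(4,5) have "\<theta> x = c" by (simp add: pin_block_def)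
    with \<theta> show ?thesis by (auto simp: satisfies_subst_query)
  qed
  ultimately show "(\<exists>g\<in>db. in_block R kc g) \<and>
    (\<forall>c. (\<exists>g\<in>db. in_block R kc g \<and> snd g ! i = c) \<longrightarrow> certain (pin_block db R kc i c) (subst_query x c q))"
    by blast
next
  assume cond: "(\<exists>g\<in>db. in_block R kc g) \<and>
    (\<forall>c. (\<exists>g\<in>db. in_block R kc g \<and> snd g ! i = c) \<longrightarrow> certain (pin_block db R kc i c) (subst_query x c q))"
  show "certain db q"
  proof (intro allI impI)
    fix r assume rep: "is_repair db r"
    from cond obtain g where "g \<in> db" "in_block R kc g" by blast
    with rep obtain h where "h \<in> r" "key_equal g h" by (auto simp: is_repair_iff)
    with \<open>in_block R kc g\<close> rep have h: "h \<in> r" "h \<in> db" "in_block R kc h"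
      by (auto simp: in_block_key_equal is_repair_def)
    with rep have "is_repair (pin_block db R kc i (snd h ! i)) r"
      by (intro repair_is_repair_of_pin_block)
    with cond h have "satisfies r (subst_query x (snd h ! i) q)" by blast
    then show "satisfies r q" by (rule satisfies_subst_query_imp)
  qed
qed

lemma certain_ground_atom_iff:
  fixes db :: "('r, 'c) fact set"
  assumes "finite db"
  shows "certain db {(R, map Cst cs)} \<longleftrightarrow>
    (R, cs) \<in> db \<and> (\<forall>g\<in>db. in_block R (take (keylen R) cs) g \<longrightarrow> g = (R, cs))"
proof -
  have sat: "satisfies r {(R, map Cst cs)} \<longleftrightarrow> (R, cs) \<in> r" for r :: "('r, 'c) fact set"
    by (simp add: satisfies_def comp_def)
  have block: "in_block R (take (keylen R) cs) g \<longleftrightarrow> key_equal (R, cs) g" for g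
    by (auto simp: in_block_def key_equal_def)
  show ?thesis
  proof (intro iffI conjI ballI allI impI)
    assume cert: "certain db {(R, map Cst cs)}"
    from certain_imp_satisfies_db[OF assms cert] sat show "(R, cs) \<in> db" by blast
    fix g assume g: "g \<in> db" "in_block R (take (keylen R) cs) g"
    have "consistent {g}" by (simp add: consistent_def)
    with g(1) obtain r where r: "is_repair db r" "g \<in> r"
      using repair_extends[OF assms, of "{g}"] by blast
    with cert sat have "(R, cs) \<in> r" by blast
    moreover from g(2) block have "key_equal (R, cs) g" by blast
    ultimately show "g = (R, cs)" using r unfolding is_repair_def consistent_def by blast
  next
    assume cond: "(R, cs) \<in> db \<and> (\<forall>g\<in>db. in_block R (take (keylen R) cs) g \<longrightarrow> g = (R, cs))"
    fix r assume rep: "is_repair db r"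
    with cond obtain h where h: "h \<in> r" "key_equal (R, cs) h" unfolding is_repair_iff by blast
    with rep have "h \<in> db" by (auto simp: is_repair_def)
    with h(2) block cond have "h = (R, cs)" by blast
    with h(1) show "satisfies r {(R, map Cst cs)}" unfolding sat by simp
  qed
qed

section \<open>First-order formulas\<close>

fun bv :: "('r, 'c) fo \<Rightarrow> nat set" where
  "bv (FAtom R ts) = {}"
| "bv (FEq s t) = {}"
| "bv (FNeg \<phi>) = bv \<phi>"
| "bv (FConj \<phi> \<psi>) = bv \<phi> \<union> bv \<psi>"
| "bv (FEx x \<phi>) = insert x (bv \<phi>)"

abbreviation FTrue :: "('r, 'c) fo" where
  "FTrue \<equiv> FEq (Cst undefined) (Cst undefined)"

abbreviation FImp :: "('r, 'c) fo \<Rightarrow> ('r, 'c) fo \<Rightarrow> ('r, 'c) fo" where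
  "FImp \<phi> \<psi> \<equiv> FNeg (FConj \<phi> (FNeg \<psi>))"

abbreviation FAll :: "nat \<Rightarrow> ('r, 'c) fo \<Rightarrow> ('r, 'c) fo" where
  "FAll x \<phi> \<equiv> FNeg (FEx x (FNeg \<phi>))"

fun FEqs :: "(nat, 'c) trm list \<Rightarrow> (nat, 'c) trm list \<Rightarrow> ('r, 'c) fo" where
  "FEqs (t # ts) (u # us) = FConj (FEq t u) (FEqs ts us)"
| "FEqs _ _ = FTrue"

fun FExs :: "nat list \<Rightarrow> ('r, 'c) fo \<Rightarrow> ('r, 'c) fo" where
  "FExs [] \<phi> = \<phi>"
| "FExs (y # ys) \<phi> = FEx y (FExs ys \<phi>)"

fun upds :: "(nat \<Rightarrow> 'c) \<Rightarrow> nat list \<Rightarrow> 'c list \<Rightarrow> nat \<Rightarrow> 'c" where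
  "upds \<sigma> (y # ys) (c # cs) = upds (\<sigma>(y := c)) ys cs"
| "upds \<sigma> _ _ = \<sigma>"

lemma holds_FEqs:
  "length ts = length us \<Longrightarrow> holds db \<sigma> (FEqs ts us) \<longleftrightarrow> map (inst_trm \<sigma>) ts = map (inst_trm \<sigma>) us"
  by (induction ts us rule: FEqs.induct) auto

lemma fv_FEqs: "fv (FEqs ts us) \<subseteq> (\<Union>t\<in>set ts. trm_fv t) \<union> (\<Union>u\<in>set us. trm_fv u)"
  by (induction ts us rule: FEqs.induct) auto

lemma bv_FEqs [simp]: "bv (FEqs ts us) = {}"
  by (induction ts us rule: FEqs.induct) auto

lemma holds_FExs:
  "holds db \<sigma> (FExs ys \<phi>) \<longleftrightarrow> (\<exists>cs. length cs = length ys \<and> holds db (upds \<sigma> ys cs) \<phi>)"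
proof (induction ys arbitrary: \<sigma>)
  case (Cons y ys)
  have "holds db \<sigma> (FExs (y # ys) \<phi>) \<longleftrightarrow>
      (\<exists>c cs. length cs = length ys \<and> holds db (upds \<sigma> (y # ys) (c # cs)) \<phi>)"
    by (simp only: FExs.simps holds.simps Cons.IH upds.simps)
  also have "\<dots> \<longleftrightarrow> (\<exists>cs. length cs = length (y # ys) \<and> holds db (upds \<sigma> (y # ys) cs) \<phi>)"
    by (metis length_Suc_conv)
  finally show ?case .
qed simp

lemma fv_FExs [simp]: "fv (FExs ys \<phi>) = fv \<phi> - set ys"
  by (induction ys) auto

lemma bv_FExs [simp]: "bv (FExs ys \<phi>) = set ys \<union> bv \<phi>"
  by (induction ys) auto

lemma upds_notin: "z \<notin> set ys \<Longrightarrow> upds \<sigma> ys cs z = \<sigma> z"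
  by (induction \<sigma> ys cs rule: upds.induct) auto

lemma map_upds: "distinct ys \<Longrightarrow> length cs = length ys \<Longrightarrow> map (upds \<sigma> ys cs) ys = cs"
  by (induction \<sigma> ys cs rule: upds.induct) (auto simp: upds_notin)

lemma inst_trm_cong: "(\<And>z. z \<in> trm_fv t \<Longrightarrow> \<sigma> z = \<sigma>' z) \<Longrightarrow> inst_trm \<sigma> t = inst_trm \<sigma>' t"
  by (cases t) auto

lemma map_inst_trm_cong:
  "(\<And>z. z \<in> (\<Union>t\<in>set ts. trm_fv t) \<Longrightarrow> \<sigma> z = \<sigma>' z) \<Longrightarrow> map (inst_trm \<sigma>) ts = map (inst_trm \<sigma>') ts"
  by (auto intro: inst_trm_cong)

definition FBlock :: "'r relname \<Rightarrow> (nat, 'c) trm list \<Rightarrow> nat list \<Rightarrow> ('r, 'c) fo \<Rightarrow> ('r, 'c) fo" where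
  "FBlock R kts ys \<psi> = FExs ys (FConj (FAtom R (kts @ map Var ys)) \<psi>)"

lemma fv_FBlock: "fv (FBlock R kts ys \<psi>) = ((\<Union>t\<in>set kts. trm_fv t) \<union> fv \<psi>) - set ys"
  by (auto simp: FBlock_def)

lemma bv_FBlock [simp]: "bv (FBlock R kts ys \<psi>) = set ys \<union> bv \<psi>"
  by (simp add: FBlock_def)

lemma holds_FBlock:
  assumes wf: "\<forall>g\<in>db. wf_fact g" and kts: "length kts = keylen R"
    and ys: "length ys = arity R - keylen R" "distinct ys" "set ys \<inter> (\<Union>t\<in>set kts. trm_fv t) = {}"
  shows "holds db \<sigma> (FBlock R kts ys \<psi>) \<longleftrightarrow>
    (\<exists>g\<in>db. in_block R (map (inst_trm \<sigma>) kts) g \<and> holds db (upds \<sigma> ys (drop (keylen R) (snd g))) \<psi>)"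
proof -
  have keys: "map (inst_trm (upds \<sigma> ys cs)) kts = map (inst_trm \<sigma>) kts" for cs
    using ys(3) by (intro map_inst_trm_cong upds_notin) blast
  have "holds db \<sigma> (FBlock R kts ys \<psi>) \<longleftrightarrow> (\<exists>cs. length cs = length ys \<and>
      (R, map (inst_trm \<sigma>) kts @ cs) \<in> db \<and> holds db (upds \<sigma> ys cs) \<psi>)"
    unfolding FBlock_def holds_FExs by (auto simp: keys comp_def map_upds[OF ys(2)])
  also have "\<dots> \<longleftrightarrow> (\<exists>g\<in>db. in_block R (map (inst_trm \<sigma>) kts) g \<and>
      holds db (upds \<sigma> ys (drop (keylen R) (snd g))) \<psi>)"
  proof
    assume "\<exists>g\<in>db. in_block R (map (inst_trm \<sigma>) kts) g \<and> holds db (upds \<sigma> ys (drop (keylen R) (snd g))) \<psi>"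
    then obtain g where g: "g \<in> db" "in_block R (map (inst_trm \<sigma>) kts) g"
      "holds db (upds \<sigma> ys (drop (keylen R) (snd g))) \<psi>" by blast
    from g(2) have "g = (R, map (inst_trm \<sigma>) kts @ drop (keylen R) (snd g))"
      unfolding in_block_def by (metis append_take_drop_id prod.collapse)
    moreover from wf g have "length (drop (keylen R) (snd g)) = length ys"
      using ys(1) by (auto simp: wf_fact_def in_block_def)
    ultimately show "\<exists>cs. length cs = length ys \<and> (R, map (inst_trm \<sigma>) kts @ cs) \<in> db \<and>
        holds db (upds \<sigma> ys cs) \<psi>"
      using g by metis
  next
    assume "\<exists>cs. length cs = length ys \<and> (R, map (inst_trm \<sigma>) kts @ cs) \<in> db \<and>
        holds db (upds \<sigma> ys cs) \<psi>"
    then obtain cs where "length cs = length ys" "(R, map (inst_trm \<sigma>) kts @ cs) \<in> db"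
      "holds db (upds \<sigma> ys cs) \<psi>" by blast
    with kts show "\<exists>g\<in>db. in_block R (map (inst_trm \<sigma>) kts) g \<and>
        holds db (upds \<sigma> ys (drop (keylen R) (snd g))) \<psi>"
      by (intro bexI[of _ "(R, map (inst_trm \<sigma>) kts @ cs)"]) (auto simp: in_block_def)
  qed
  finally show ?thesis .
qed

fun relativize :: "('r relname \<Rightarrow> (nat, 'c) trm list \<Rightarrow> ('r, 'c) fo) \<Rightarrow> ('r, 'c) fo \<Rightarrow> ('r, 'c) fo" where
  "relativize gd (FAtom R ts) = FConj (FAtom R ts) (gd R ts)"
| "relativize gd (FEq s t) = FEq s t"
| "relativize gd (FNeg \<phi>) = FNeg (relativize gd \<phi>)"
| "relativize gd (FConj \<phi> \<psi>) = FConj (relativize gd \<phi>) (relativize gd \<psi>)"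
| "relativize gd (FEx x \<phi>) = FEx x (relativize gd \<phi>)"

lemma holds_relativize:
  assumes gd: "\<And>\<sigma> R ts. holds db \<sigma> (gd R ts) \<longleftrightarrow> P \<sigma> (R, map (inst_trm \<sigma>) ts)"
    and bound: "\<And>y \<sigma> c. y \<in> bv \<phi> \<Longrightarrow> P (\<sigma>(y := c)) = P \<sigma>"
  shows "holds db \<sigma> (relativize gd \<phi>) \<longleftrightarrow> holds {f\<in>db. P \<sigma> f} \<sigma> \<phi>"
  using bound
proof (induction \<phi> arbitrary: \<sigma>)
  case (FEx x \<phi>)
  have "P (\<sigma>(x := c)) = P \<sigma>" for c by (rule FEx.prems) simp
  with FEx show ?case by simp
qed (auto simp: gd)

lemma fv_relativize:
  "(\<And>R ts. fv (gd R ts) \<subseteq> (\<Union>t\<in>set ts. trm_fv t) \<union> Z) \<Longrightarrow> fv (relativize gd \<phi>) \<subseteq> fv \<phi> \<union> Z"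
  by (induction \<phi>) fastforce+

lemma bv_relativize: "(\<And>R ts. bv (gd R ts) = {}) \<Longrightarrow> bv (relativize gd \<phi>) = bv \<phi>"
  by (induction \<phi>) auto

section \<open>Queries with parametrised constants\<close>

definition map_atom_consts :: "('c \<Rightarrow> 'd) \<Rightarrow> ('r, 'v, 'c) atom \<Rightarrow> ('r, 'v, 'd) atom" where
  "map_atom_consts f F = (fst F, map (map_trm id f) (snd F))"

definition map_consts :: "('c \<Rightarrow> 'd) \<Rightarrow> ('r, 'v, 'c) query \<Rightarrow> ('r, 'v, 'd) query" where
  "map_consts f q = map_atom_consts f ` q"

definition query_consts :: "('r, 'v, 'c) query \<Rightarrow> 'c set" where
  "query_consts q = (\<Union>F\<in>q. \<Union>t\<in>set (snd F). set2_trm t)"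

lemma Var_in_map_trm_image [simp]: "Var x \<in> map_trm id f ` A \<longleftrightarrow> Var x \<in> A"
proof
  assume "Var x \<in> map_trm id f ` A"
  then obtain t where "t \<in> A" "Var x = map_trm id f t" by blast
  then show "Var x \<in> A" by (cases t) auto
qed (metis image_eqI trm.map(1) id_apply)

lemma fst_map_atom_consts [simp]: "fst (map_atom_consts f F) = fst F"
  by (simp add: map_atom_consts_def)

lemma key_vars_map_atom_consts [simp]: "key_vars (map_atom_consts f F) = key_vars F"
  by (simp add: key_vars_def map_atom_consts_def take_map)

lemma atom_vars_map_atom_consts [simp]: "atom_vars (map_atom_consts f F) = atom_vars F"
  by (simp add: atom_vars_def map_atom_consts_def)

lemma query_vars_map_consts [simp]: "query_vars (map_consts f q) = query_vars q"
  by (simp add: query_vars_def map_consts_def)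

lemma map_consts_union: "map_consts f (q1 \<union> q2) = map_consts f q1 \<union> map_consts f q2"
  by (simp add: map_consts_def image_Un)

lemma map_consts_comp:
  fixes q :: "('r, 'v, 'c) query"
  shows "map_consts g (map_consts f q) = map_consts (g \<circ> f) q"
proof -
  have "map_trm (id :: 'v \<Rightarrow> 'v) g \<circ> map_trm id f = map_trm id (g \<circ> f)"
    by (rule ext) (simp add: trm.map_comp)
  then show ?thesis
    unfolding map_consts_def map_atom_consts_def image_image by (simp only: fst_conv snd_conv map_map)
qed

lemma map_consts_id: "map_consts id q = q"
  by (simp add: map_consts_def map_atom_consts_def trm.map_id0)

lemma map_consts_cong:
  assumes "\<And>a. a \<in> query_consts q \<Longrightarrow> f a = g a"
  shows "map_consts f q = map_consts g q"
  unfolding map_consts_def map_atom_consts_def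
  using assms by (intro image_cong refl) (auto simp: query_consts_def intro!: trm.map_cong)

lemma map_consts_subst_query:
  "map_consts f (subst_query x a q) = subst_query x (f a) (map_consts f q)"
proof -
  have "map_trm id f (subst_trm x a t) = subst_trm x (f a) (map_trm id f t)" for t
    by (cases t) auto
  then show ?thesis
    by (simp add: map_consts_def map_atom_consts_def subst_query_def image_image comp_def)
qed

lemma query_consts_subst_query: "query_consts (subst_query x a q) \<subseteq> insert a (query_consts q)"
proof -
  have "set2_trm (subst_trm x a t) \<subseteq> insert a (set2_trm t)" for t
    by (cases t) auto
  then show ?thesis by (fastforce simp: query_consts_def subst_query_def)
qed

lemma self_join_free_map_consts: "self_join_free q \<Longrightarrow> self_join_free (map_consts f q)"
  by (auto simp: self_join_free_def map_consts_def)

lemma wf_query_map_consts: "wf_query q \<Longrightarrow> wf_query (map_consts f q)"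
  by (auto simp: wf_query_def wf_atom_def map_consts_def map_atom_consts_def)

lemma self_join_free_subst_query: "self_join_free q \<Longrightarrow> self_join_free (subst_query x a q)"
  by (auto simp: self_join_free_def subst_query_def)

lemma wf_query_subst_query: "wf_query q \<Longrightarrow> wf_query (subst_query x a q)"
  by (auto simp: wf_query_def wf_atom_def subst_query_def)

text \<open>A parametrised query has first-order terms as constants; a valuation of their variables
  (the parameters) instantiates it to an ordinary query.\<close>

definition params :: "('r, 'v, (nat, 'c) trm) query \<Rightarrow> nat set" where
  "params q = (\<Union>a\<in>query_consts q. trm_fv a)"

abbreviation inst_query :: "(nat \<Rightarrow> 'c) \<Rightarrow> ('r, 'v, (nat, 'c) trm) query \<Rightarrow> ('r, 'v, 'c) query" where
  "inst_query \<sigma> q \<equiv> map_consts (inst_trm \<sigma>) q"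

lemma finite_trm_fv [simp]: "finite (trm_fv t)"
  by (cases t) auto

lemma finite_params: "wf_query q \<Longrightarrow> finite (params q)"
proof -
  have "finite (set2_trm t)" for t :: "('v, (nat, 'c) trm) trm" by (cases t) auto
  moreover assume "wf_query q"
  ultimately show ?thesis by (simp add: params_def query_consts_def wf_query_def)
qed

lemma params_subst_query: "params (subst_query x (Var n) q) \<subseteq> insert n (params q)"
  using query_consts_subst_query[of x "Var n" q] by (fastforce simp: params_def)

lemma inst_query_subst_fresh:
  assumes "n \<notin> params q"
  shows "inst_query (\<sigma>(n := c)) (subst_query x (Var n) q) = subst_query x c (inst_query \<sigma> q)"
proof -
  have "inst_query (\<sigma>(n := c)) q = inst_query \<sigma> q"
    using assms by (intro map_consts_cong inst_trm_cong) (auto simp: params_def)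
  then show ?thesis by (simp add: map_consts_subst_query)
qed

text \<open>The safety rules only inspect the shape of a query, the query with all its constants
  identified, so a safety derivation of q can be replayed on any parametrised query of the same
  shape.\<close>

abbreviation shape :: "('r, 'v, 'c) query \<Rightarrow> ('r, 'v, unit) query" where
  "shape q \<equiv> map_consts (\<lambda>_. ()) q"

lemma shape_map_consts [simp]: "shape (map_consts f q) = shape q"
  by (simp add: map_consts_comp comp_def)

lemma shape_subst_query: "shape (subst_query x a q) = subst_query x () (shape q)"
  by (simp add: map_consts_subst_query)

text \<open>The bound variables of a rewriting avoid X, so that it can be placed under a
  relativisation or quantifier over the variables in X without capture.\<close>
definition fo_rewriting :: "('r, 'v, (nat, 'c) trm) query \<Rightarrow> nat set \<Rightarrow> ('r, 'c) fo \<Rightarrow> bool" where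
  "fo_rewriting q X \<phi> \<longleftrightarrow> fv \<phi> \<subseteq> params q \<and> bv \<phi> \<inter> X = {} \<and>
     (\<forall>\<sigma> db. uncertain_db db \<longrightarrow> (certain db (inst_query \<sigma> q) \<longleftrightarrow> holds db \<sigma> \<phi>))"

lemma params_union: "params (q1 \<union> q2) = params q1 \<union> params q2"
  by (auto simp: params_def query_consts_def)

lemma fo_rewriting_union:
  assumes "query_vars q1 \<inter> query_vars q2 = {}" "fo_rewriting q1 X \<phi>1" "fo_rewriting q2 X \<phi>2"
  shows "fo_rewriting (q1 \<union> q2) X (FConj \<phi>1 \<phi>2)"
  using assms certain_union_disjoint[of "inst_query _ q1" "inst_query _ q2"]
  by (auto simp: fo_rewriting_def params_union map_consts_union)

lemma fo_rewriting_key_var: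
  fixes q :: "('r, 'v, (nat, 'c) trm) query"
  assumes sjf: "self_join_free q" and kx: "\<forall>F\<in>q. x \<in> key_vars F"
    and n: "n \<notin> params q" "n \<notin> X"
    and \<phi>: "fo_rewriting (subst_query x (Var n) q) (insert n X) \<phi>"
  shows "fo_rewriting q X (FEx n \<phi>)"
  unfolding fo_rewriting_def
proof (intro conjI allI impI)
  show "fv (FEx n \<phi>) \<subseteq> params q" "bv (FEx n \<phi>) \<inter> X = {}"
    using \<phi> n params_subst_query[of x n q] by (auto simp: fo_rewriting_def)
  fix \<sigma> :: "nat \<Rightarrow> 'c" and db :: "('r, 'c) fact set"
  assume "uncertain_db db"
  with \<phi> have "certain db (inst_query (\<sigma>(n := c)) (subst_query x (Var n) q)) \<longleftrightarrow> holds db (\<sigma>(n := c)) \<phi>"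
    for c unfolding fo_rewriting_def by blast
  then have "holds db \<sigma> (FEx n \<phi>) \<longleftrightarrow> (\<exists>c. certain db (subst_query x c (inst_query \<sigma> q)))"
    by (simp add: inst_query_subst_fresh[OF n(1)])
  also have "\<dots> \<longleftrightarrow> certain db (inst_query \<sigma> q)"
    using kx by (intro certain_subst_key_var_iff[symmetric] self_join_free_map_consts sjf)
      (auto simp: map_consts_def)
  finally show "certain db (inst_query \<sigma> q) \<longleftrightarrow> holds db \<sigma> (FEx n \<phi>)" by simp
qed

lemma map_inst_upds_fresh:
  "set ys \<inter> (\<Union>t\<in>set ts. trm_fv t) = {} \<Longrightarrow> map (inst_trm (upds \<sigma> ys cs)) ts = map (inst_trm \<sigma>) ts"
  by (intro map_inst_trm_cong upds_notin) blast

definition ground_atom_fo :: "'r relname \<Rightarrow> (nat, 'c) trm list \<Rightarrow> nat list \<Rightarrow> ('r, 'c) fo" where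
  "ground_atom_fo R ts ys = FConj (FAtom R ts)
     (FNeg (FBlock R (take (keylen R) ts) ys (FNeg (FEqs (map Var ys) (drop (keylen R) ts)))))"

lemma fv_ground_atom_fo: "fv (ground_atom_fo R ts ys) \<subseteq> (\<Union>t\<in>set ts. trm_fv t)"
  using fv_FEqs[of "map Var ys" "drop (keylen R) ts"]
  by (auto simp: ground_atom_fo_def fv_FBlock dest: in_set_dropD in_set_takeD)

lemma bv_ground_atom_fo [simp]: "bv (ground_atom_fo R ts ys) = set ys"
  by (simp add: ground_atom_fo_def)

lemma holds_ground_atom_fo:
  fixes \<sigma> :: "nat \<Rightarrow> 'c"
  assumes wf: "\<forall>g\<in>db. wf_fact g" and sig: "keylen R \<le> arity R" "length ts = arity R"
    and ys: "length ys = arity R - keylen R" "distinct ys" "set ys \<inter> (\<Union>t\<in>set ts. trm_fv t) = {}"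
  defines "cs \<equiv> map (inst_trm \<sigma>) ts" and "k \<equiv> keylen R"
  shows "holds db \<sigma> (ground_atom_fo R ts ys) \<longleftrightarrow>
    (R, cs) \<in> db \<and> (\<forall>g\<in>db. in_block R (take k cs) g \<longrightarrow> g = (R, cs))"
proof -
  have len: "length (take k ts) = keylen R" "length ys = length (drop k ts)"
    using sig ys(1) by (auto simp: k_def)
  have ys_take: "set ys \<inter> (\<Union>t\<in>set (take k ts). trm_fv t) = {}"
    and ys_drop: "set ys \<inter> (\<Union>t\<in>set (drop k ts). trm_fv t) = {}"
    using ys(3) by (auto dest: in_set_takeD in_set_dropD)
  have match: "g = (R, cs) \<longleftrightarrow> holds db (upds \<sigma> ys (drop k (snd g))) (FEqs (map Var ys) (drop k ts))"
    if "g \<in> db" "in_block R (take k cs) g" for g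
  proof -
    from wf that have "length (drop k (snd g)) = length ys"
      using ys(1) by (auto simp: wf_fact_def in_block_def k_def)
    then have "map (inst_trm (upds \<sigma> ys (drop k (snd g)))) (map Var ys) = drop k (snd g)"
      by (simp add: comp_def map_upds[OF ys(2)])
    moreover from ys_drop have "map (inst_trm (upds \<sigma> ys (drop k (snd g)))) (drop k ts) = drop k cs"
      by (simp add: map_inst_upds_fresh cs_def drop_map)
    moreover from that(2) have "g = (R, cs) \<longleftrightarrow> drop k (snd g) = drop k cs"
      unfolding in_block_def k_def by (metis append_take_drop_id prod.collapse prod.inject)
    ultimately show ?thesis using len(2) by (simp add: holds_FEqs)
  qed
  from len(1) ys_take have block: "holds db \<sigma> (FBlock R (take k ts) ys (FNeg (FEqs (map Var ys) (drop k ts)))) \<longleftrightarrow>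
      (\<exists>g\<in>db. in_block R (take k cs) g \<and> \<not> holds db (upds \<sigma> ys (drop k (snd g))) (FEqs (map Var ys) (drop k ts)))"
    using ys(1,2) by (simp add: holds_FBlock[OF wf] cs_def take_map k_def)
  show ?thesis
    unfolding ground_atom_fo_def holds.simps k_def[symmetric] block cs_def[symmetric]
    using match by blast
qed

lemma fo_rewriting_ground_atom:
  fixes ts :: "(nat, 'c) trm list"
  assumes sig: "valid_sig R" "length ts = arity R"
    and ys: "length ys = arity R - keylen R" "distinct ys" "set ys \<inter> (X \<union> (\<Union>t\<in>set ts. trm_fv t)) = {}"
  defines "q \<equiv> {(R, map Cst ts)} :: ('r, 'v, (nat, 'c) trm) query"
  shows "fo_rewriting q X (ground_atom_fo R ts ys)"
  unfolding fo_rewriting_def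
proof (intro conjI allI impI)
  show "fv (ground_atom_fo R ts ys) \<subseteq> params q"
    using fv_ground_atom_fo[of R ts ys] by (auto simp: q_def params_def query_consts_def)
  show "bv (ground_atom_fo R ts ys) \<inter> X = {}" using ys(3) by auto
  fix \<sigma> :: "nat \<Rightarrow> 'c" and db :: "('r, 'c) fact set"
  assume "uncertain_db db"
  then have wf: "\<forall>g\<in>db. wf_fact g" and "finite db" by (auto simp: uncertain_db_def)
  define cs where "cs = map (inst_trm \<sigma>) ts"
  have "inst_query \<sigma> q = {(R, map Cst cs)}"
    by (simp add: q_def map_consts_def map_atom_consts_def cs_def)
  moreover have "holds db \<sigma> (ground_atom_fo R ts ys) \<longleftrightarrow>
      (R, cs) \<in> db \<and> (\<forall>g\<in>db. in_block R (take (keylen R) cs) g \<longrightarrow> g = (R, cs))"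
    unfolding cs_def using sig ys by (intro holds_ground_atom_fo[OF wf]) (auto simp: valid_sig_def)
  ultimately show "certain db (inst_query \<sigma> q) \<longleftrightarrow> holds db \<sigma> (ground_atom_fo R ts ys)"
    by (simp only: certain_ground_atom_iff[OF \<open>finite db\<close>])
qed

definition pin_guard ::
    "'r relname \<Rightarrow> (nat, 'c) trm list \<Rightarrow> nat \<Rightarrow> nat \<Rightarrow> 'r relname \<Rightarrow> (nat, 'c) trm list \<Rightarrow> ('r, 'c) fo" where
  "pin_guard R kts i n R' ts = (if R' = R \<and> length ts = arity R
     then FImp (FEqs (take (keylen R) ts) kts) (FEq (ts ! i) (Var n)) else FTrue)"

lemma fv_pin_guard:
  fixes R :: "'r relname" and kts :: "(nat, 'c) trm list"
  assumes "i < arity R"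
  shows "fv (pin_guard R kts i n R' ts) \<subseteq> (\<Union>t\<in>set ts. trm_fv t) \<union> insert n (\<Union>t\<in>set kts. trm_fv t)"
proof -
  have "fv (FEqs (take (keylen R) ts) kts :: ('r, 'c) fo) \<subseteq> (\<Union>t\<in>set ts. trm_fv t) \<union> (\<Union>t\<in>set kts. trm_fv t)"
    using fv_FEqs[of "take (keylen R) ts" kts] set_take_subset[of "keylen R" ts] by blast
  with assms show ?thesis by (auto simp: pin_guard_def)
qed

lemma holds_relativize_pin_guard:
  fixes R :: "'r relname" and kts :: "(nat, 'c) trm list"
  assumes wf: "\<forall>g\<in>db. wf_fact g" and kts: "length kts = keylen R" "keylen R \<le> arity R" "i < arity R"
    and bv: "bv \<phi> \<inter> insert n (\<Union>t\<in>set kts. trm_fv t) = {}"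
  shows "holds db \<sigma> (relativize (pin_guard R kts i n) \<phi>) \<longleftrightarrow>
    holds (pin_block db R (map (inst_trm \<sigma>) kts) i (\<sigma> n)) \<sigma> \<phi>"
proof -
  define P where "P \<sigma> f \<longleftrightarrow> fst f = R \<and> length (snd f) = arity R \<and>
      take (keylen R) (snd f) = map (inst_trm \<sigma>) kts \<longrightarrow> snd f ! i = \<sigma> n"
    for \<sigma> :: "nat \<Rightarrow> 'c" and f :: "('r, 'c) fact"
  have "holds db \<sigma>' (pin_guard R kts i n R' ts) \<longleftrightarrow> P \<sigma>' (R', map (inst_trm \<sigma>') ts)" for \<sigma>' R' ts
    using kts by (auto simp: pin_guard_def P_def holds_FEqs take_map)
  moreover have "P (\<sigma>'(y := c)) = P \<sigma>'" if "y \<in> bv \<phi>" for y \<sigma>' c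
  proof -
    from that bv have "map (inst_trm (\<sigma>'(y := c))) kts = map (inst_trm \<sigma>') kts"
      by (intro map_inst_trm_cong) auto
    with that bv show ?thesis by (auto simp: P_def)
  qed
  ultimately have "holds db \<sigma> (relativize (pin_guard R kts i n) \<phi>) \<longleftrightarrow> holds {f\<in>db. P \<sigma> f} \<sigma> \<phi>"
    by (rule holds_relativize)
  also have "{f\<in>db. P \<sigma> f} = pin_block db R (map (inst_trm \<sigma>) kts) i (\<sigma> n)"
    using wf by (auto simp: P_def pin_block_def in_block_def wf_fact_def)
  finally show ?thesis .
qed

definition ground_key_fo ::
    "'r relname \<Rightarrow> (nat, 'c) trm list \<Rightarrow> nat list \<Rightarrow> nat \<Rightarrow> nat \<Rightarrow> ('r, 'c) fo \<Rightarrow> ('r, 'c) fo" where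
  "ground_key_fo R kts ys i n \<phi> = FConj (FBlock R kts ys FTrue)
     (FAll n (FImp (FBlock R kts ys (FEq (Var (ys ! (i - keylen R))) (Var n)))
                   (relativize (pin_guard R kts i n) \<phi>)))"

lemma fv_ground_key_fo:
  assumes "i < arity R" "i - keylen R < length ys"
  shows "fv (ground_key_fo R kts ys i n \<phi>) \<subseteq> (\<Union>t\<in>set kts. trm_fv t) \<union> (fv \<phi> - {n})"
proof -
  have "fv (relativize (pin_guard R kts i n) \<phi>) \<subseteq> fv \<phi> \<union> insert n (\<Union>t\<in>set kts. trm_fv t)"
    using assms(1) by (intro fv_relativize fv_pin_guard)
  with assms(2) show ?thesis by (auto simp: ground_key_fo_def fv_FBlock)
qed

lemma bv_ground_key_fo [simp]: "bv (ground_key_fo R kts ys i n \<phi>) = insert n (set ys \<union> bv \<phi>)"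
  by (auto simp: ground_key_fo_def bv_relativize pin_guard_def)

lemma holds_ground_key_fo:
  fixes \<sigma> :: "nat \<Rightarrow> 'c"
  assumes wf: "\<forall>g\<in>db. wf_fact g"
    and R: "length kts = keylen R" "keylen R \<le> i" "i < arity R"
    and ys: "length ys = arity R - keylen R" "distinct ys" "set ys \<inter> insert n (\<Union>t\<in>set kts. trm_fv t) = {}"
    and n: "n \<notin> (\<Union>t\<in>set kts. trm_fv t)" and bv: "bv \<phi> \<inter> insert n (\<Union>t\<in>set kts. trm_fv t) = {}"
  defines "kc \<equiv> map (inst_trm \<sigma>) kts"
  shows "holds db \<sigma> (ground_key_fo R kts ys i n \<phi>) \<longleftrightarrow> (\<exists>g\<in>db. in_block R kc g) \<and>
    (\<forall>c. (\<exists>g\<in>db. in_block R kc g \<and> snd g ! i = c) \<longrightarrow> holds (pin_block db R kc i c) (\<sigma>(n := c)) \<phi>)"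
proof -
  have ys_kts: "set ys \<inter> (\<Union>t\<in>set kts. trm_fv t) = {}" using ys(3) by blast
  have kc: "map (inst_trm (\<sigma>(n := c))) kts = kc" for c
    unfolding kc_def using n by (intro map_inst_trm_cong) auto
  have val_at_i: "upds (\<sigma>(n := c)) ys (drop (keylen R) (snd g)) (ys ! (i - keylen R)) = snd g ! i"
    if "g \<in> db" "fst g = R" for g c
  proof -
    from wf that ys(1) have len: "length (drop (keylen R) (snd g)) = length ys"
      by (auto simp: wf_fact_def)
    with R(2,3) ys(1) have i: "i - keylen R < length ys" by simp
    then have "upds (\<sigma>(n := c)) ys (drop (keylen R) (snd g)) (ys ! (i - keylen R)) =
        map (upds (\<sigma>(n := c)) ys (drop (keylen R) (snd g))) ys ! (i - keylen R)" by simp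
    also have "\<dots> = drop (keylen R) (snd g) ! (i - keylen R)" by (simp add: map_upds[OF ys(2) len])
    also have "\<dots> = snd g ! i" using R(2) len i by (subst nth_drop) auto
    finally show ?thesis .
  qed
  have "n \<notin> set ys" using ys(3) by blast
  then have pinned_value: "holds db (\<sigma>(n := c)) (FBlock R kts ys (FEq (Var (ys ! (i - keylen R))) (Var n))) \<longleftrightarrow>
      (\<exists>g\<in>db. in_block R kc g \<and> snd g ! i = c)" for c
    using R(1) ys(1,2) ys_kts val_at_i by (auto simp: holds_FBlock[OF wf] kc upds_notin in_block_def)
  have pinned: "holds db (\<sigma>(n := c)) (relativize (pin_guard R kts i n) \<phi>) \<longleftrightarrow>
      holds (pin_block db R kc i c) (\<sigma>(n := c)) \<phi>" for c
    using holds_relativize_pin_guard[OF wf R(1) _ R(3) bv, of "\<sigma>(n := c)"] R by (simp add: kc)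
  have nonempty: "holds db \<sigma> (FBlock R kts ys FTrue) \<longleftrightarrow> (\<exists>g\<in>db. in_block R kc g)"
    using R(1) ys(1,2) ys_kts by (simp add: holds_FBlock[OF wf] kc_def)
  show ?thesis
    unfolding ground_key_fo_def holds.simps nonempty pinned_value pinned by blast
qed

lemma uncertain_db_pin_block: "uncertain_db db \<Longrightarrow> uncertain_db (pin_block db R kc i c)"
  by (auto simp: uncertain_db_def pin_block_def)

lemma fo_rewriting_ground_key:
  fixes q :: "('r, 'v, (nat, 'c) trm) query"
  assumes wf: "wf_query q" and F: "F \<in> q" "fst F = R" "take (keylen R) (snd F) = map Cst kts"
      "keylen R \<le> i" "i < length (snd F)" "snd F ! i = Var x"
    and n: "n \<notin> params q" "n \<notin> X"
    and ys: "length ys = arity R - keylen R" "distinct ys" "set ys \<inter> insert n (X \<union> params q) = {}"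
    and \<phi>: "fo_rewriting (subst_query x (Var n) q) (insert n (X \<union> params q)) \<phi>"
  shows "fo_rewriting q X (ground_key_fo R kts ys i n \<phi>)"
  unfolding fo_rewriting_def
proof (intro conjI allI impI)
  from wf F(1,2) have sig: "keylen R \<le> arity R" "length (snd F) = arity R"
    by (auto simp: wf_query_def wf_atom_def valid_sig_def)
  then have "length (take (keylen R) (snd F)) = keylen R" by simp
  with F(3) have kts: "length kts = keylen R" by simp
  have "Cst t \<in> set (snd F)" if "t \<in> set kts" for t
    using that F(3) by (metis image_eqI in_set_takeD list.set_map)
  with F(1) have fv_kts: "(\<Union>t\<in>set kts. trm_fv t) \<subseteq> params q"
    by (force simp: params_def query_consts_def)
  from \<phi> have fv\<phi>: "fv \<phi> \<subseteq> insert n (params q)" and bv\<phi>: "bv \<phi> \<inter> insert n (X \<union> params q) = {}"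
    using params_subst_query[of x n q] by (auto simp: fo_rewriting_def)
  have "i < arity R" "i - keylen R < length ys" using F(4,5) sig ys(1) by simp_all
  with fv_kts fv\<phi> show "fv (ground_key_fo R kts ys i n \<phi>) \<subseteq> params q"
    using fv_ground_key_fo[of i R ys kts n \<phi>] by blast
  show "bv (ground_key_fo R kts ys i n \<phi>) \<inter> X = {}" using ys(3) n(2) bv\<phi> by auto
  fix \<sigma> :: "nat \<Rightarrow> 'c" and db :: "('r, 'c) fact set"
  assume db: "uncertain_db db"
  define kc where "kc = map (inst_trm \<sigma>) kts"
  have ground_key: "certain db (inst_query \<sigma> q) \<longleftrightarrow> (\<exists>g\<in>db. in_block R kc g) \<and>
      (\<forall>c. (\<exists>g\<in>db. in_block R kc g \<and> snd g ! i = c) \<longrightarrow>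
        certain (pin_block db R kc i c) (subst_query x c (inst_query \<sigma> q)))"
    using db F by (intro certain_subst_ground_key_iff[of _ "map_atom_consts (inst_trm \<sigma>) F"])
      (auto simp: uncertain_db_def map_consts_def map_atom_consts_def take_map kc_def)
  have pinned: "certain (pin_block db R kc i c) (subst_query x c (inst_query \<sigma> q)) \<longleftrightarrow>
      holds (pin_block db R kc i c) (\<sigma>(n := c)) \<phi>" for c
  proof -
    from \<phi> uncertain_db_pin_block[OF db] have "certain (pin_block db R kc i c)
        (inst_query (\<sigma>(n := c)) (subst_query x (Var n) q)) \<longleftrightarrow> holds (pin_block db R kc i c) (\<sigma>(n := c)) \<phi>"
      unfolding fo_rewriting_def by blast
    then show ?thesis unfolding inst_query_subst_fresh[OF n(1)] .
  qed
  have "holds db \<sigma> (ground_key_fo R kts ys i n \<phi>) \<longleftrightarrow> (\<exists>g\<in>db. in_block R kc g) \<and>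
      (\<forall>c. (\<exists>g\<in>db. in_block R kc g \<and> snd g ! i = c) \<longrightarrow> holds (pin_block db R kc i c) (\<sigma>(n := c)) \<phi>)"
    unfolding kc_def using db sig F(4,5) kts ys fv_kts n(1) bv\<phi>
    by (intro holds_ground_key_fo) (auto simp: uncertain_db_def)
  then show "certain db (inst_query \<sigma> q) \<longleftrightarrow> holds db \<sigma> (ground_key_fo R kts ys i n \<phi>)"
    unfolding ground_key pinned by blast
qed

section \<open>Safe queries have first-order rewritings\<close>

lemma shape_eq_obtain_atom:
  assumes "shape q = shape q0" "F0 \<in> q0"
  obtains F where "F \<in> q" "fst F = fst F0" "key_vars F = key_vars F0" "atom_vars F = atom_vars F0"
proof -
  from assms have "map_atom_consts (\<lambda>_. ()) F0 \<in> map_atom_consts (\<lambda>_. ()) ` q"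
    by (auto simp: map_consts_def)
  then obtain F where "F \<in> q" "map_atom_consts (\<lambda>_. ()) F = map_atom_consts (\<lambda>_. ()) F0"
    by (metis imageE)
  with that show thesis by (metis fst_map_atom_consts key_vars_map_atom_consts atom_vars_map_atom_consts)
qed

lemma shape_eq_union:
  fixes q :: "('r, 'v, 'c) query" and q1 q2 :: "('r, 'v, 'd) query"
  assumes "shape q = shape (q1 \<union> q2)"
  obtains qa qb where "q = qa \<union> qb" "qa \<subseteq> q" "qb \<subseteq> q" "shape qa = shape q1" "shape qb = shape q2"
proof -
  let ?u = "map_atom_consts (\<lambda>_. ()) :: ('r, 'v, 'c) atom \<Rightarrow> ('r, 'v, unit) atom"
  have restrict: "shape {F\<in>q. ?u F \<in> shape q'} = shape q'" if "shape q' \<subseteq> shape q" for q' :: "('r, 'v, 'd) query"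
  proof
    show "shape {F\<in>q. ?u F \<in> shape q'} \<subseteq> shape q'" by (auto simp: map_consts_def)
    show "shape q' \<subseteq> shape {F\<in>q. ?u F \<in> shape q'}"
    proof
      fix G assume G: "G \<in> shape q'"
      with that obtain F where "F \<in> q" "G = ?u F" unfolding map_consts_def by blast
      with G show "G \<in> shape {F\<in>q. ?u F \<in> shape q'}"
        unfolding map_consts_def by (intro image_eqI[where x = F]) auto
    qed
  qed
  have split: "shape q = shape q1 \<union> shape q2" using assms by (simp add: map_consts_union)
  then have "?u F \<in> shape q1 \<union> shape q2" if "F \<in> q" for F
    using that unfolding map_consts_def by blast
  then have "q = {F\<in>q. ?u F \<in> shape q1} \<union> {F\<in>q. ?u F \<in> shape q2}" by blast
  moreover from split have "shape q1 \<subseteq> shape q" "shape q2 \<subseteq> shape q" by auto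
  ultimately show thesis using that restrict by blast
qed

lemma shape_eq_singleton:
  assumes "shape q = shape {F0}" "self_join_free q"
  obtains F where "q = {F}" "atom_vars F = atom_vars F0"
proof -
  obtain F where F: "F \<in> q" "fst F = fst F0" "key_vars F = key_vars F0" "atom_vars F = atom_vars F0"
    using shape_eq_obtain_atom[OF assms(1) singletonI] .
  have "G = F" if "G \<in> q" for G
  proof -
    from that have "map_atom_consts (\<lambda>_. ()) G \<in> shape q" unfolding map_consts_def by (rule imageI)
    with assms(1) have "map_atom_consts (\<lambda>_. ()) G = map_atom_consts (\<lambda>_. ()) F0"
      by (simp add: map_consts_def)
    then have "fst G = fst F" using F(2) by (metis fst_map_atom_consts)
    with assms(2) that F(1) show ?thesis unfolding self_join_free_def by blast
  qed
  with F(1,4) that show thesis by blast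
qed

lemma no_Var_iff_map_Cst: "(\<forall>x. Var x \<notin> set ts) \<longleftrightarrow> (\<exists>cs. ts = map Cst cs)"
proof -
  have "(\<forall>x. Var x \<noteq> t) \<longleftrightarrow> (\<exists>c. t = Cst c)" for t :: "('v, 'c) trm" by (cases t) auto
  then show ?thesis unfolding ex_map_conv by blast
qed

lemma ground_key_position:
  assumes "key_vars F = {}" "x \<in> atom_vars F"
  obtains kts i where "take (keylen (fst F)) (snd F) = map Cst kts"
    "keylen (fst F) \<le> i" "i < length (snd F)" "snd F ! i = Var x"
proof -
  from assms(1) obtain kts where "take (keylen (fst F)) (snd F) = map Cst kts"
    using no_Var_iff_map_Cst by (metis empty_iff key_vars_def mem_Collect_eq)
  moreover from assms(2) obtain i where i: "i < length (snd F)" "snd F ! i = Var x"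
    by (auto simp: atom_vars_def in_set_conv_nth)
  moreover have "keylen (fst F) \<le> i"
  proof (rule ccontr)
    assume "\<not> keylen (fst F) \<le> i"
    with i have "Var x \<in> set (take (keylen (fst F)) (snd F))" by (auto simp: in_set_conv_nth)
    with assms(1) show False by (simp add: key_vars_def)
  qed
  ultimately show thesis using that by blast
qed

lemma fresh_nat_list:
  assumes "finite (Y :: nat set)"
  obtains ys where "length ys = m" "distinct ys" "set ys \<inter> Y = {}"
proof -
  define N where "N = Suc (Max (insert 0 Y))"
  have "y < N" if "y \<in> Y" for y
    using assms that by (simp add: N_def le_imp_less_Suc)
  then have "set [N..<N + m] \<inter> Y = {}" by fastforce
  then show thesis using that[of "[N..<N + m]"] by simp
qed

lemma safe_has_fo_rewriting:
  fixes q :: "('r, 'v, (nat, 'c) trm) query" and q0 :: "('r, 'v, 'd) query"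
  assumes "is_safe q0" "shape q = shape q0" "wf_query q" "self_join_free q" "finite X"
  shows "\<exists>\<phi>. fo_rewriting q X \<phi>"
  using assms
proof (induction q0 arbitrary: q X rule: is_safe.induct)
  case (SE1 q0)
  then obtain F0 where "q0 = {F0}" "atom_vars F0 = {}"
    by (auto simp: SE1_cond_def card_1_singleton_iff query_vars_def)
  with SE1.prems obtain F where q: "q = {F}" "atom_vars F = {}" by (metis shape_eq_singleton)
  then obtain ts where ts: "snd F = map Cst ts"
    using no_Var_iff_map_Cst[of "snd F"] by (auto simp: atom_vars_def)
  then have q_ts: "q = {(fst F, map Cst ts)}" using q(1) by (metis prod.collapse)
  from SE1.prems(2) q(1) have "wf_atom F" by (simp add: wf_query_def)
  with ts have sig: "valid_sig (fst F)" "length ts = arity (fst F)" by (auto simp: wf_atom_def)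
  have "finite (X \<union> (\<Union>t\<in>set ts. trm_fv t))" using SE1.prems(4) by simp
  then obtain ys where "length ys = arity (fst F) - keylen (fst F)" "distinct ys"
    "set ys \<inter> (X \<union> (\<Union>t\<in>set ts. trm_fv t)) = {}"
    by (rule fresh_nat_list)
  from fo_rewriting_ground_atom[OF sig this] show ?case unfolding q_ts by blast
next
  case (SE2 q0 q1 q2)
  then obtain qa qb where q: "q = qa \<union> qb" "qa \<subseteq> q" "qb \<subseteq> q" "shape qa = shape q1" "shape qb = shape q2"
    by (metis shape_eq_union)
  with SE2.prems have "wf_query qa" "wf_query qb" "self_join_free qa" "self_join_free qb"
    by (auto simp: wf_query_def self_join_free_def dest: finite_subset)
  with SE2.IH q(4,5) SE2.prems(4) obtain \<phi>1 \<phi>2 where "fo_rewriting qa X \<phi>1" "fo_rewriting qb X \<phi>2"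
    by meson
  moreover have "query_vars qa \<inter> query_vars qb = {}"
  proof -
    have "query_vars qa = query_vars q1" "query_vars qb = query_vars q2"
      using q(4,5) query_vars_map_consts by metis+
    with SE2.hyps(5) show ?thesis by simp
  qed
  ultimately show ?case using q(1) fo_rewriting_union by blast
next
  case (SE3 q0 x a)
  have "finite (X \<union> params q)" using SE3.prems(2,4) finite_params by blast
  then obtain n where n: "n \<notin> X" "n \<notin> params q"
    using ex_new_if_finite[OF infinite_UNIV_nat] by blast
  have "shape (subst_query x (Var n) q) = shape (subst_query x a q0)"
    using SE3.prems(1) by (simp add: shape_subst_query)
  from SE3.IH[OF this wf_query_subst_query[OF SE3.prems(2)] self_join_free_subst_query[OF SE3.prems(3)]]
    obtain \<phi> where \<phi>: "fo_rewriting (subst_query x (Var n) q) (insert n X) \<phi>"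
    using SE3.prems(4) by blast
  have "x \<in> key_vars F" if F: "F \<in> q" for F
  proof -
    obtain F0 where "F0 \<in> q0" "fst F0 = fst F" "key_vars F0 = key_vars F" "atom_vars F0 = atom_vars F"
      using shape_eq_obtain_atom[OF SE3.prems(1)[symmetric] F] .
    with SE3.hyps(4) show ?thesis by auto
  qed
  with SE3.prems(3) have "fo_rewriting q X (FEx n \<phi>)"
    using n \<phi> by (intro fo_rewriting_key_var) auto
  then show ?case by blast
next
  case (SE4 q0 F0 x a)
  obtain F where F: "F \<in> q" "key_vars F = {}" "x \<in> atom_vars F"
    using shape_eq_obtain_atom[OF SE4.prems(1) SE4.hyps(4)] SE4.hyps(5,6) by metis
  obtain kts i where i: "take (keylen (fst F)) (snd F) = map Cst kts"
    "keylen (fst F) \<le> i" "i < length (snd F)" "snd F ! i = Var x"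
    using F(2,3) by (rule ground_key_position)
  have fin: "finite (X \<union> params q)" using SE4.prems(2,4) finite_params by blast
  then obtain n where n: "n \<notin> X" "n \<notin> params q"
    using ex_new_if_finite[OF infinite_UNIV_nat] by blast
  from fin obtain ys where ys: "length ys = arity (fst F) - keylen (fst F)" "distinct ys"
    "set ys \<inter> insert n (X \<union> params q) = {}"
    by (metis finite_insert fresh_nat_list)
  have "shape (subst_query x (Var n) q) = shape (subst_query x a q0)"
    using SE4.prems(1) by (simp add: shape_subst_query)
  moreover from fin have "finite (insert n (X \<union> params q))" by simp
  ultimately obtain \<phi> where "fo_rewriting (subst_query x (Var n) q) (insert n (X \<union> params q)) \<phi>"
    using SE4.IH wf_query_subst_query[OF SE4.prems(2)] self_join_free_subst_query[OF SE4.prems(3)] by meson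
  from fo_rewriting_ground_key[OF SE4.prems(2) F(1) refl i n(2,1) ys this] show ?case by blast
qed

theorem theorem6:
  fixes q :: "('r, 'v, 'c) query"
  assumes "wf_query q"
    and "self_join_free q"
    and "is_safe q"
  shows "fo_expressible q"
proof -
  let ?q = "map_consts Cst q :: ('r, 'v, (nat, 'c) trm) query"
  have "wf_query ?q" "self_join_free ?q"
    using assms(1,2) by (simp_all add: wf_query_map_consts self_join_free_map_consts)
  then obtain \<phi> where \<phi>: "fo_rewriting ?q {} \<phi>"
    using safe_has_fo_rewriting[OF assms(3)] by (metis finite.emptyI shape_map_consts)
  have "params ?q = {}"
    by (auto simp: params_def query_consts_def map_consts_def map_atom_consts_def trm.set_map)
  have inst: "inst_query \<sigma> ?q = q" for \<sigma> :: "nat \<Rightarrow> 'c"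
    by (simp add: map_consts_comp comp_def map_consts_id[unfolded id_def])
  from \<phi> \<open>params ?q = {}\<close> have "sentence \<phi>" by (simp add: fo_rewriting_def sentence_def)
  moreover have "db \<in> CERTAINTY q \<longleftrightarrow> models db \<phi>" if "uncertain_db db" for db
    using \<phi> that by (simp add: fo_rewriting_def models_def CERTAINTY_iff inst)
  ultimately show ?thesis unfolding fo_expressible_def by blast
qed

end
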